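(* The Kudryashov–Sinelshchikov equation $$u_t+uu_x-(1+u)u_{xx}-u_x^2=0$$ is nonlinearly self-adjoint with the substitution $$\phi(t,x,u)=c_1\exp(-t-x)+c_2,$$ where $c_1,c_2$ are constants with $(c_1,c_2)\neq(0,0)$. It is not strictly self-adjoint.
   Context: For a differential equation $\mathfrak{F}[u]=0$ in independent variables $t,x$ and dependent variable $u$, introduce a new dependent variable $\nu=\nu(t,x)$. The formal Lagrangian is $\mathfrak{L}=\nu\mathfrak{F}$ and the adjoint is $\mathfrak{F}^*=\frac{\delta\mathfrak{L}}{\delta u}$, where $\frac{\delta}{\delta u}=\frac{\partial}{\partial u}-D_t\frac{\partial}{\partial u_t}-D_x\frac{\partial}{\partial u_x}+D_x^2\frac{\partial}{\partial u_{xx}}$ and $D_t,D_x$ are total derivatives. The equation is nonlinearly self-adjoint if there is a substitution $\nu=\phi(t,x,u)\neq 0$ (derivatives of $\nu$ replaced by total derivatives of $\phi$) such that $\mathfrak{F}^*|_{\nu=\phi}=\lambda\mathfrak{F}$ for some coefficient $\lambda=\lambda(t,x,u,\dots)$; it is strictly self-adjoint if this holds with $\phi=u$. *)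

theory Defs
  imports "HOL-Analysis.Analysis"
begin

definition pdt :: "(real \<Rightarrow> real \<Rightarrow> real) \<Rightarrow> real \<Rightarrow> real \<Rightarrow> real" where
  "pdt f t x = deriv (\<lambda>s. f s x) t"

definition pdx :: "(real \<Rightarrow> real \<Rightarrow> real) \<Rightarrow> real \<Rightarrow> real \<Rightarrow> real" where
  "pdx f t x = deriv (\<lambda>y. f t y) x"

definition jet :: "(real \<Rightarrow> real \<Rightarrow> real) \<Rightarrow> nat \<Rightarrow> nat \<Rightarrow> real \<Rightarrow> real \<Rightarrow> real" where
  "jet u i j = (pdt ^^ i) ((pdx ^^ j) u)"

definition smooth2 :: "(real \<Rightarrow> real \<Rightarrow> real) \<Rightarrow> bool" where
  "smooth2 u \<longleftrightarrow> (\<forall>i j p. (\<lambda>q. jet u i j (fst q) (snd q)) differentiable (at p))"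

text \<open>Differential functions of order 2 in the jet variables (t, x, u, u_t, u_x, u_xx),
  and their evaluation along a function u (t,x).\<close>

type_synonym dfun = "real \<Rightarrow> real \<Rightarrow> real \<Rightarrow> real \<Rightarrow> real \<Rightarrow> real \<Rightarrow> real"

definition eval_df :: "dfun \<Rightarrow> (real \<Rightarrow> real \<Rightarrow> real) \<Rightarrow> real \<Rightarrow> real \<Rightarrow> real" where
  "eval_df F u t x = F t x (u t x) (pdt u t x) (pdx u t x) (pdx (pdx u) t x)"

text \<open>Variational derivative delta/delta u of a Lagrangian
  L(t, x, u, u_t, u_x, u_xx, nu), evaluated along functions u(t,x) and nu(t,x);
  total derivatives D_t, D_x are realised as partial derivatives of the composition
  with u and nu.\<close>

definition var_deriv ::
  "(real \<Rightarrow> real \<Rightarrow> real \<Rightarrow> real \<Rightarrow> real \<Rightarrow> real \<Rightarrow> real \<Rightarrow> real)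
   \<Rightarrow> (real \<Rightarrow> real \<Rightarrow> real) \<Rightarrow> (real \<Rightarrow> real \<Rightarrow> real) \<Rightarrow> real \<Rightarrow> real \<Rightarrow> real" where
  "var_deriv L u \<nu> =
    (let ut = pdt u; ux = pdx u; uxx = pdx (pdx u);
         L_u = (\<lambda>t x. deriv (\<lambda>w. L t x w (ut t x) (ux t x) (uxx t x) (\<nu> t x)) (u t x));
         L_ut = (\<lambda>t x. deriv (\<lambda>w. L t x (u t x) w (ux t x) (uxx t x) (\<nu> t x)) (ut t x));
         L_ux = (\<lambda>t x. deriv (\<lambda>w. L t x (u t x) (ut t x) w (uxx t x) (\<nu> t x)) (ux t x));
         L_uxx = (\<lambda>t x. deriv (\<lambda>w. L t x (u t x) (ut t x) (ux t x) w (\<nu> t x)) (uxx t x))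
     in (\<lambda>t x. L_u t x - pdt L_ut t x - pdx L_ux t x + pdx (pdx L_uxx) t x))"

definition formal_lagrangian ::
  "dfun \<Rightarrow> real \<Rightarrow> real \<Rightarrow> real \<Rightarrow> real \<Rightarrow> real \<Rightarrow> real \<Rightarrow> real \<Rightarrow> real" where
  "formal_lagrangian F t x w wt wx wxx v = v * F t x w wt wx wxx"

definition adjoint :: "dfun \<Rightarrow> (real \<Rightarrow> real \<Rightarrow> real) \<Rightarrow> (real \<Rightarrow> real \<Rightarrow> real) \<Rightarrow> real \<Rightarrow> real \<Rightarrow> real" where
  "adjoint F u \<nu> = var_deriv (formal_lagrangian F) u \<nu>"

text \<open>Self-adjointness with substitution nu = phi(t,x,u): phi is not identically zero and
  there is a coefficient lambda, a function of t, x and finitely many derivatives of u,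
  with F^*|_{nu = phi} = lambda F identically (for every smooth u, at every point).\<close>

definition self_adjoint_with :: "dfun \<Rightarrow> (real \<Rightarrow> real \<Rightarrow> real \<Rightarrow> real) \<Rightarrow> bool" where
  "self_adjoint_with F \<phi> \<longleftrightarrow>
     \<phi> \<noteq> (\<lambda>t x w. 0) \<and>
     (\<exists>lam :: real \<Rightarrow> real \<Rightarrow> (nat \<Rightarrow> nat \<Rightarrow> real) \<Rightarrow> real.
        (\<exists>N. \<forall>t x J J'. (\<forall>i j. i + j \<le> N \<longrightarrow> J i j = J' i j) \<longrightarrow> lam t x J = lam t x J') \<and>
        (\<forall>u. smooth2 u \<longrightarrow> (\<forall>t x.
            adjoint F u (\<lambda>t x. \<phi> t x (u t x)) t x
              = lam t x (\<lambda>i j. jet u i j t x) * eval_df F u t x)))"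

definition nonlinearly_self_adjoint :: "dfun \<Rightarrow> bool" where
  "nonlinearly_self_adjoint F \<longleftrightarrow> (\<exists>\<phi>. self_adjoint_with F \<phi>)"

definition strictly_self_adjoint :: "dfun \<Rightarrow> bool" where
  "strictly_self_adjoint F \<longleftrightarrow> self_adjoint_with F (\<lambda>t x w. w)"

definition KS :: dfun where
  "KS t x u ut ux uxx = ut + u * ux - (1 + u) * uxx - ux ^ 2"

end

theory Submission
  imports Defs
begin

text \<open>For a multiplier \<open>\<nu>(t,x)\<close> that does not depend on \<open>u\<close>, the terms of the adjoint
  involving derivatives of \<open>u\<close> cancel and
  \<open>F\<^sup>* = -(\<nu>\<^sub>t + \<nu>\<^sub>x\<^sub>x) - u (\<nu>\<^sub>x + \<nu>\<^sub>x\<^sub>x)\<close>.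
  For \<open>\<nu> = c\<^sub>1 exp(-t-x) + c\<^sub>2\<close> both brackets vanish, so \<open>F\<^sup>* = 0\<close> and \<open>\<lambda> = 0\<close> works.
  For \<open>\<nu> = u = x\<close> one gets \<open>F\<^sup>* = -x\<close>, which is \<open>-1\<close> at \<open>x = 1\<close>, where \<open>u = x\<close> solves the
  equation; so \<open>F\<^sup>*\<close> cannot be a multiple of \<open>F\<close>.\<close>

lemma pdx_eqI: "((\<lambda>y. f t y) has_real_derivative D) (at x) \<Longrightarrow> pdx f t x = D"
  unfolding pdx_def by (rule DERIV_imp_deriv)

lemma pdt_eqI: "((\<lambda>s. f s x) has_real_derivative D) (at t) \<Longrightarrow> pdt f t x = D"
  unfolding pdt_def by (rule DERIV_imp_deriv)

lemma has_real_derivative_pdx: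
  assumes "(\<lambda>q. f (fst q) (snd q)) differentiable (at (t, x))"
  shows "((\<lambda>y. f t y) has_real_derivative pdx f t x) (at x)"
proof -
  have "((\<lambda>q. f (fst q) (snd q)) \<circ> (\<lambda>y. (t, y))) differentiable (at x)"
    using assms by (intro differentiable_chain_at differentiable_Pair) simp_all
  then show ?thesis
    unfolding pdx_def by (simp add: o_def DERIV_deriv_iff_real_differentiable)
qed

definition twice_x_differentiable :: "(real \<Rightarrow> real \<Rightarrow> real) \<Rightarrow> bool" where
  "twice_x_differentiable f \<longleftrightarrow>
     (\<forall>t x. ((\<lambda>y. f t y) has_real_derivative pdx f t x) (at x) \<and>
            ((\<lambda>y. pdx f t y) has_real_derivative pdx (pdx f) t x) (at x))"

lemma twice_x_differentiableD:
  assumes "twice_x_differentiable f"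
  shows "((\<lambda>y. f t y) has_real_derivative pdx f t x) (at x)"
    and "((\<lambda>y. pdx f t y) has_real_derivative pdx (pdx f) t x) (at x)"
  using assms unfolding twice_x_differentiable_def by auto

lemma smooth2_twice_x_differentiable:
  assumes "smooth2 u"
  shows "twice_x_differentiable u"
proof -
  have "((\<lambda>y. (pdx ^^ j) u t y) has_real_derivative (pdx ^^ Suc j) u t x) (at x)" for j t x
    using has_real_derivative_pdx assms[unfolded smooth2_def jet_def, rule_format, of 0 j "(t, x)"]
    by simp
  from this[of 0] this[of 1] show ?thesis
    unfolding twice_x_differentiable_def by simp
qed

lemma adjoint_KS_expanded:
  "adjoint KS u \<nu> = (\<lambda>t x. \<nu> t x * (pdx u t x - pdx (pdx u) t x) - pdt \<nu> t x
     - pdx (\<lambda>t x. \<nu> t x * (u t x - 2 * pdx u t x)) t x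
     + pdx (pdx (\<lambda>t x. - (\<nu> t x * (1 + u t x)))) t x)"
proof -
  have "deriv (\<lambda>w. v * (a + w * b - (1 + w) * c - b\<^sup>2)) z = v * (b - c)"
    and "deriv (\<lambda>w. v * (w + p * b - (1 + p) * c - b\<^sup>2)) z = v"
    and "deriv (\<lambda>w. v * (a + p * w - (1 + p) * c - w\<^sup>2)) z = v * (p - 2 * z)"
    and "deriv (\<lambda>w. v * (a + p * b - (1 + p) * w - b\<^sup>2)) z = - (v * (1 + p))"
    for v a b c p z :: real
    by (rule DERIV_imp_deriv; auto intro!: derivative_eq_intros simp: algebra_simps)+
  note Lagrangian_partials = this
  show ?thesis
    unfolding adjoint_def var_deriv_def Let_def formal_lagrangian_def KS_def
    by (simp only: Lagrangian_partials)
qed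

lemma adjoint_KS:
  assumes u: "twice_x_differentiable u" and \<nu>: "twice_x_differentiable \<nu>"
  shows "adjoint KS u \<nu> t x =
    - (pdt \<nu> t x + pdx (pdx \<nu>) t x) - u t x * (pdx \<nu> t x + pdx (pdx \<nu>) t x)"
proof -
  note derivs = twice_x_differentiableD[OF u] twice_x_differentiableD[OF \<nu>]
  have advection: "pdx (\<lambda>t x. \<nu> t x * (u t x - 2 * pdx u t x)) t x =
      pdx \<nu> t x * (u t x - 2 * pdx u t x) + \<nu> t x * (pdx u t x - 2 * pdx (pdx u) t x)"
    by (rule pdx_eqI) (auto intro!: derivative_eq_intros derivs)
  have diffusion: "pdx (\<lambda>t x. - (\<nu> t x * (1 + u t x))) =
      (\<lambda>t x. - (pdx \<nu> t x * (1 + u t x) + \<nu> t x * pdx u t x))"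
    by (intro ext pdx_eqI) (auto intro!: derivative_eq_intros derivs)
  have diffusion_x: "pdx (\<lambda>t x. - (pdx \<nu> t x * (1 + u t x) + \<nu> t x * pdx u t x)) t x =
      - (pdx (pdx \<nu>) t x * (1 + u t x) + 2 * pdx \<nu> t x * pdx u t x + \<nu> t x * pdx (pdx u) t x)"
    by (rule pdx_eqI) (auto intro!: derivative_eq_intros derivs simp: algebra_simps)
  show ?thesis
    unfolding adjoint_KS_expanded advection diffusion diffusion_x by (simp add: algebra_simps)
qed

lemma self_adjoint_with_if_adjoint_zero:
  assumes "\<phi> \<noteq> (\<lambda>t x w. 0)"
    and "\<And>u t x. smooth2 u \<Longrightarrow> adjoint F u (\<lambda>t x. \<phi> t x (u t x)) t x = 0"
  shows "self_adjoint_with F \<phi>"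
  unfolding self_adjoint_with_def using assms by (intro conjI exI[of _ "\<lambda>t x J. 0"]) auto

lemma adjoint_zero_at_solution:
  assumes "self_adjoint_with F \<phi>" "smooth2 u" "eval_df F u t x = 0"
  shows "adjoint F u (\<lambda>t x. \<phi> t x (u t x)) t x = 0"
  using assms unfolding self_adjoint_with_def by auto

definition affine_tx :: "(real \<Rightarrow> real \<Rightarrow> real) \<Rightarrow> bool" where
  "affine_tx f \<longleftrightarrow> (\<exists>a b c. f = (\<lambda>t x. a * t + b * x + c))"

lemma affine_tx_pdx: "affine_tx f \<Longrightarrow> affine_tx (pdx f)"
proof (unfold affine_tx_def, elim exE)
  fix a b c assume "f = (\<lambda>t x. a * t + b * x + c)"
  then have "pdx f = (\<lambda>t x. 0 * t + 0 * x + b)"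
    by (intro ext pdx_eqI) (auto intro!: derivative_eq_intros)
  then show "\<exists>a b c. pdx f = (\<lambda>t x. a * t + b * x + c)" by blast
qed

lemma affine_tx_pdt: "affine_tx f \<Longrightarrow> affine_tx (pdt f)"
proof (unfold affine_tx_def, elim exE)
  fix a b c assume "f = (\<lambda>t x. a * t + b * x + c)"
  then have "pdt f = (\<lambda>t x. 0 * t + 0 * x + a)"
    by (intro ext pdt_eqI) (auto intro!: derivative_eq_intros)
  then show "\<exists>a b c. pdt f = (\<lambda>t x. a * t + b * x + c)" by blast
qed

lemma affine_tx_jet:
  assumes "affine_tx u"
  shows "affine_tx (jet u i j)"
proof -
  have "affine_tx ((pdx ^^ j) u)"
    using assms by (induction j) (simp_all add: affine_tx_pdx)
  then show ?thesis
    unfolding jet_def by (induction i) (simp_all add: affine_tx_pdt)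
qed

lemma smooth2_affine_tx:
  assumes "affine_tx u"
  shows "smooth2 u"
  unfolding smooth2_def
proof (intro allI)
  fix i j p
  obtain a b c where "jet u i j = (\<lambda>t x. a * t + b * x + c)"
    using affine_tx_jet[OF assms] unfolding affine_tx_def by blast
  then show "(\<lambda>q. jet u i j (fst q) (snd q)) differentiable (at p)"
    by (auto intro!: derivative_eq_intros simp: differentiable_def)
qed

lemma KS_self_adjoint_with_exp:
  fixes c1 c2 :: real
  assumes "(c1, c2) \<noteq> (0, 0)"
  shows "self_adjoint_with KS (\<lambda>t x w. c1 * exp (- t - x) + c2)"
proof (rule self_adjoint_with_if_adjoint_zero)
  define \<nu> where "\<nu> = (\<lambda>t x. c1 * exp (- t - x) + c2)"
  have \<nu>_x: "pdx \<nu> = (\<lambda>t x. - (c1 * exp (- t - x)))"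
    unfolding \<nu>_def by (intro ext pdx_eqI) (auto intro!: derivative_eq_intros)
  have \<nu>_xx: "pdx (\<lambda>t x. - (c1 * exp (- t - x))) = (\<lambda>t x. c1 * exp (- t - x))"
    by (intro ext pdx_eqI) (auto intro!: derivative_eq_intros)
  have \<nu>_t: "pdt \<nu> t x = - (c1 * exp (- t - x))" for t x
    unfolding \<nu>_def by (intro pdt_eqI) (auto intro!: derivative_eq_intros)
  have "twice_x_differentiable \<nu>"
    unfolding twice_x_differentiable_def \<nu>_x \<nu>_xx
    by (auto simp: \<nu>_def intro!: derivative_eq_intros)
  then show "adjoint KS u (\<lambda>t x. c1 * exp (- t - x) + c2) t x = 0" if "smooth2 u" for u t x
    using adjoint_KS[OF smooth2_twice_x_differentiable[OF that]]
    by (simp add: \<nu>_def [symmetric] \<nu>_t \<nu>_x \<nu>_xx)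
  have "c1 * exp (- 0 - 0) + c2 \<noteq> c1 * exp (- 1 - 0) + c2 \<or> c1 * exp (- 0 - 0) + c2 \<noteq> 0"
    using assms by auto
  then show "(\<lambda>t x w. c1 * exp (- t - x) + c2) \<noteq> (\<lambda>t x w. 0)"
    by (metis (mono_tags))
qed

lemma KS_not_strictly_self_adjoint: "\<not> strictly_self_adjoint KS"
proof
  assume "strictly_self_adjoint KS"
  define u :: "real \<Rightarrow> real \<Rightarrow> real" where "u = (\<lambda>t x. x)"
  have "affine_tx u"
    unfolding affine_tx_def u_def by (intro exI[of _ 0] exI[of _ 1]) auto
  then have smooth: "smooth2 u" by (rule smooth2_affine_tx)
  then have u_diff: "twice_x_differentiable u" by (rule smooth2_twice_x_differentiable)
  have u_x: "pdx u = (\<lambda>t x. 1)"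
    unfolding u_def by (intro ext pdx_eqI) (auto intro!: derivative_eq_intros)
  have u_xx: "pdx (\<lambda>t x. 1) = (\<lambda>t x. 0 :: real)"
    by (intro ext pdx_eqI) (auto intro!: derivative_eq_intros)
  have u_t: "pdt u t x = 0" for t x
    unfolding u_def by (intro pdt_eqI) (auto intro!: derivative_eq_intros)
  have "eval_df KS u 0 1 = 0"
    unfolding eval_df_def KS_def u_x u_xx u_t by (simp add: u_def)
  moreover have "adjoint KS u u 0 1 = -1"
    using adjoint_KS[OF u_diff u_diff]
    by (simp add: u_x u_xx u_t) (simp add: u_def)
  ultimately show False
    using adjoint_zero_at_solution[OF \<open>strictly_self_adjoint KS\<close>[unfolded strictly_self_adjoint_def]
        smooth]
    by (simp add: u_def)
qed

theorem corollary3: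
  shows "(\<forall>c1 c2 :: real. (c1, c2) \<noteq> (0, 0) \<longrightarrow>
            self_adjoint_with KS (\<lambda>t x w. c1 * exp (- t - x) + c2))
         \<and> \<not> strictly_self_adjoint KS"
  using KS_self_adjoint_with_exp KS_not_strictly_self_adjoint by blast

end
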